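(* Let $V(1),\dots,V(T)\in\mathbb R^p$ and $0=\nu_0<\nu_1<\dots<\nu_M=T$ be such that $V(\nu_m+1)=\dots=V(\nu_{m+1})$ for all $m=0,\dots,M-1$. Let $\Delta$ be a positive integer and suppose $\nu=\nu_m$ for some $1\le m\le M-1$ satisfies $|\nu_m-\nu_{m'}|\ge\Delta$ for all $m'\ne m$. With \[ \widetilde V(t)=\sqrt{\frac{T-t}{Tt}}\sum_{r=1}^tV(r)-\sqrt{\frac{t}{T(T-t)}}\sum_{r=t+1}^TV(r),\qquad t\in\{1,\dots,T-1\}, \] it holds that \[ \max_{1\le t\le T-1}\|\widetilde V(t)\|^2\ \ge\ \frac{\|V(\nu)-V(\nu+1)\|^2\Delta^2}{48T}. \]
   Context: $\|\cdot\|$ is the Euclidean norm. *)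

theory Defs
  imports "HOL-Analysis.Analysis"
begin

definition Vtilde :: "(nat \<Rightarrow> real ^ 'p) \<Rightarrow> nat \<Rightarrow> nat \<Rightarrow> real ^ 'p" where
  "Vtilde V T t =
     sqrt ((real T - real t) / (real T * real t)) *\<^sub>R (\<Sum>r=1..t. V r)
   - sqrt (real t / (real T * (real T - real t))) *\<^sub>R (\<Sum>r=t+1..T. V r)"

end

theory Submission
  imports Defs
begin

text \<open>Up to the factor \<open>sqrt (T / (t (T - t)))\<close>, \<open>Vtilde V T t\<close> is the centred partial sum
  \<open>C t = S t - (t / T) S T\<close> with \<open>S t = V 1 + ... + V t\<close>; note \<open>C 0 = C T = 0\<close>.
  If \<open>V\<close> equals \<open>a\<close> on the \<open>\<Delta>\<close> steps before \<open>n\<close> and \<open>b\<close> on the \<open>\<Delta>\<close> steps after it,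
  the second difference \<open>C (n + \<Delta>) - 2 C n + C (n - \<Delta>)\<close> is \<open>\<Delta> (b - a)\<close>, so one of these three
  values has norm at least \<open>\<Delta> \<parallel>b - a\<parallel> / 4\<close>, and that index lies strictly between \<open>0\<close> and \<open>T\<close>
  unless \<open>a = b\<close>. As \<open>t (T - t) \<le> T\<^sup>2 / 4\<close>, this gives the bound with \<open>4 T\<close> in place of \<open>48 T\<close>.\<close>

definition centered_cusum :: "(nat \<Rightarrow> 'a::real_vector) \<Rightarrow> nat \<Rightarrow> nat \<Rightarrow> 'a" where
  "centered_cusum V T t = (\<Sum>r=1..t. V r) - (real t / real T) *\<^sub>R (\<Sum>r=1..T. V r)"

lemma centered_cusum_0 [simp]: "centered_cusum V T 0 = 0"
  by (simp add: centered_cusum_def)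

lemma centered_cusum_self [simp]: "centered_cusum V T T = 0"
  by (cases "T = 0") (simp_all add: centered_cusum_def)

lemma sum_atLeastAtMost_add_constant_block:
  assumes "\<And>r. k < r \<Longrightarrow> r \<le> k + d \<Longrightarrow> V r = c"
  shows "(\<Sum>r=1..k+d. V r) = (\<Sum>r=1..k. V r) + real d *\<^sub>R (c :: 'a::real_vector)"
proof -
  have "(\<Sum>r=1..k+d. V r) = (\<Sum>r=1..k. V r) + (\<Sum>r=k+1..k+d. V r)"
    by (rule sum.ub_add_nat) simp
  also have "(\<Sum>r=k+1..k+d. V r) = (\<Sum>r=k+1..k+d. c)"
    using assms by (intro sum.cong) auto
  finally show ?thesis
    by (simp add: sum_constant_scaleR)
qed

lemma centered_cusum_second_difference:
  assumes "\<Delta> \<le> n"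
    and before: "\<And>t. n - \<Delta> < t \<Longrightarrow> t \<le> n \<Longrightarrow> V t = a"
    and after: "\<And>t. n < t \<Longrightarrow> t \<le> n + \<Delta> \<Longrightarrow> V t = b"
  shows "centered_cusum V T (n + \<Delta>) - 2 *\<^sub>R centered_cusum V T n + centered_cusum V T (n - \<Delta>)
           = real \<Delta> *\<^sub>R (b - a)"
proof -
  define S where "S t = (\<Sum>r=1..t. V r)" for t
  have S_after: "S (n + \<Delta>) = S n + real \<Delta> *\<^sub>R b"
    unfolding S_def using after by (rule sum_atLeastAtMost_add_constant_block)
  have "S (n - \<Delta> + \<Delta>) = S (n - \<Delta>) + real \<Delta> *\<^sub>R a"
    unfolding S_def using before assms(1) by (intro sum_atLeastAtMost_add_constant_block) auto
  then have S_before: "S n = S (n - \<Delta>) + real \<Delta> *\<^sub>R a"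
    using assms(1) by simp
  have weights: "real (n + \<Delta>) / real T - 2 * (real n / real T) + real (n - \<Delta>) / real T = 0"
    using assms(1) by (simp add: of_nat_diff add_divide_distrib[symmetric] diff_divide_distrib[symmetric])
  have "centered_cusum V T (n + \<Delta>) - 2 *\<^sub>R centered_cusum V T n + centered_cusum V T (n - \<Delta>)
      = (S (n + \<Delta>) - S n) - (S n - S (n - \<Delta>))
        - (real (n + \<Delta>) / real T - 2 * (real n / real T) + real (n - \<Delta>) / real T) *\<^sub>R S T"
    unfolding centered_cusum_def S_def by (simp add: scaleR_2 algebra_simps)
  then show ?thesis
    unfolding weights S_after S_before by (simp add: algebra_simps)
qed

lemma norm_second_difference_le:
  fixes x y z :: "'a::real_normed_vector"
  shows "\<exists>w\<in>{x, y, z}. norm (x - 2 *\<^sub>R y + z) \<le> 4 * norm w"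
proof -
  have "norm (x - 2 *\<^sub>R y + z) \<le> norm (x - 2 *\<^sub>R y) + norm z"
    by (rule norm_triangle_ineq)
  also have "norm (x - 2 *\<^sub>R y) \<le> norm x + 2 * norm y"
    using norm_triangle_ineq4[of x "2 *\<^sub>R y"] by simp
  finally have "norm (x - 2 *\<^sub>R y + z) \<le> norm x + 2 * norm y + norm z"
    by simp
  then show ?thesis
    by (cases "norm x \<le> norm y"; cases "norm y \<le> norm z"; cases "norm x \<le> norm z") auto
qed

lemma Vtilde_eq_scaled_centered_cusum:
  assumes "1 \<le> t" "t < T"
  shows "Vtilde V T t = sqrt (real T / (real t * (real T - real t))) *\<^sub>R centered_cusum V T t"
proof -
  define k where "k = sqrt (real T / (real t * (real T - real t)))"
  have pos: "real t > 0" "real T - real t > 0" "real T > 0"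
    using assms by auto
  have split: "(\<Sum>r=1..T. V r) = (\<Sum>r=1..t. V r) + (\<Sum>r=t+1..T. V r)"
    using sum.ub_add_nat[of 1 t V "T - t"] assms by simp
  have "sqrt ((real T - real t) / (real T * real t))
      = sqrt (real T / (real t * (real T - real t)) * ((real T - real t) / real T)\<^sup>2)"
    using pos by (simp add: field_simps power2_eq_square)
  then have left: "sqrt ((real T - real t) / (real T * real t)) = k * ((real T - real t) / real T)"
    unfolding k_def real_sqrt_mult using pos by simp
  have "sqrt (real t / (real T * (real T - real t)))
      = sqrt (real T / (real t * (real T - real t)) * (real t / real T)\<^sup>2)"
    using pos by (simp add: field_simps power2_eq_square)
  then have right: "sqrt (real t / (real T * (real T - real t))) = k * (real t / real T)"
    unfolding k_def real_sqrt_mult using pos by simp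
  have "Vtilde V T t = k *\<^sub>R ((((real T - real t) / real T) + real t / real T) *\<^sub>R (\<Sum>r=1..t. V r)
      - (real t / real T) *\<^sub>R (\<Sum>r=1..T. V r))"
    unfolding Vtilde_def left right split by (simp add: algebra_simps)
  also have "((real T - real t) / real T) + real t / real T = 1"
    using pos by (simp add: field_simps)
  finally show ?thesis
    unfolding k_def centered_cusum_def by simp
qed

lemma norm_Vtilde_ge_centered_cusum:
  assumes "1 \<le> t" "t < T"
  shows "4 / real T * (norm (centered_cusum V T t))\<^sup>2 \<le> (norm (Vtilde V T t))\<^sup>2"
proof -
  have pos: "real t > 0" "real T - real t > 0"
    using assms by auto
  have "4 * (real t * (real T - real t)) \<le> real T * real T"
    using zero_le_power2[of "real T - 2 * real t"] by (simp add: power2_eq_square algebra_simps)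
  then have "4 / real T \<le> real T / (real t * (real T - real t))"
    using pos by (simp add: field_simps)
  then have "4 / real T * (norm (centered_cusum V T t))\<^sup>2
      \<le> real T / (real t * (real T - real t)) * (norm (centered_cusum V T t))\<^sup>2"
    by (rule mult_right_mono) simp
  also have "\<dots> = (norm (Vtilde V T t))\<^sup>2"
    using pos assms by (simp add: Vtilde_eq_scaled_centered_cusum power_mult_distrib)
  finally show ?thesis .
qed

lemma Vtilde_jump_lower_bound:
  fixes V :: "nat \<Rightarrow> real ^ 'p"
  assumes "0 < \<Delta>" "\<Delta> \<le> n" "n + \<Delta> \<le> T"
    and before: "\<And>t. n - \<Delta> < t \<Longrightarrow> t \<le> n \<Longrightarrow> V t = a"
    and after: "\<And>t. n < t \<Longrightarrow> t \<le> n + \<Delta> \<Longrightarrow> V t = b"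
  shows "\<exists>t\<in>{1..T-1}. (real \<Delta> * norm (b - a))\<^sup>2 / (4 * real T) \<le> (norm (Vtilde V T t))\<^sup>2"
proof -
  let ?C = "centered_cusum V T"
  have "?C (n + \<Delta>) - 2 *\<^sub>R ?C n + ?C (n - \<Delta>) = real \<Delta> *\<^sub>R (b - a)"
    using assms(2) before after by (rule centered_cusum_second_difference)
  then have "\<exists>w\<in>?C ` {n - \<Delta>, n, n + \<Delta>}. norm (real \<Delta> *\<^sub>R (b - a)) \<le> 4 * norm w"
    using norm_second_difference_le[of "?C (n + \<Delta>)" "?C n" "?C (n - \<Delta>)"] by auto
  then obtain t where t: "t \<in> {n - \<Delta>, n, n + \<Delta>}" and big: "real \<Delta> * norm (b - a) \<le> 4 * norm (?C t)"
    by auto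
  show ?thesis
  proof (cases "?C t = 0")
    case True
    with big have "a = b"
      using assms(1) by (simp add: mult_le_0_iff)
    then show ?thesis
      using assms by (intro bexI[of _ n]) auto
  next
    case False
    then have "t \<noteq> 0" "t \<noteq> T"
      by (metis centered_cusum_0, metis centered_cusum_self)
    moreover have "t \<le> T"
      using t assms(3) by auto
    ultimately have t_range: "1 \<le> t" "t < T"
      by auto
    have "(real \<Delta> * norm (b - a))\<^sup>2 / (4 * real T) \<le> (4 * norm (?C t))\<^sup>2 / (4 * real T)"
      using big by (intro divide_right_mono power_mono) auto
    also have "\<dots> = 4 / real T * (norm (?C t))\<^sup>2"
      by (simp add: power_mult_distrib)
    also have "\<dots> \<le> (norm (Vtilde V T t))\<^sup>2"
      using t_range by (rule norm_Vtilde_ge_centered_cusum)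
    finally show ?thesis
      using t_range by auto
  qed
qed

lemma lift_Suc_mono_le_upto:
  fixes f :: "nat \<Rightarrow> 'a::order"
  assumes "\<And>i. i < M \<Longrightarrow> f i \<le> f (Suc i)" "i \<le> j" "j \<le> M"
  shows "f i \<le> f j"
  using assms(2,3)
proof (induction j rule: dec_induct)
  case (step j)
  then have "f i \<le> f j"
    by simp
  also have "f j \<le> f (Suc j)"
    using step.prems assms(1) by simp
  finally show ?case .
qed simp

lemma separated_changepoint_window:
  fixes \<nu> :: "nat \<Rightarrow> nat"
  assumes nuM: "\<nu> M = T"
    and nu_mono: "\<And>i. i < M \<Longrightarrow> \<nu> i < \<nu> (Suc i)"
    and const: "\<And>i t. i < M \<Longrightarrow> \<nu> i + 1 \<le> t \<Longrightarrow> t \<le> \<nu> (Suc i) \<Longrightarrow> V t = V (\<nu> i + 1)"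
    and m_range: "1 \<le> m" "m < M"
    and sep: "\<And>m'. m' \<le> M \<Longrightarrow> m' \<noteq> m \<Longrightarrow> \<bar>int (\<nu> m) - int (\<nu> m')\<bar> \<ge> int \<Delta>"
  shows "\<nu> m + \<Delta> \<le> T"
    and "\<Delta> \<le> \<nu> m"
    and "\<And>t. \<nu> m - \<Delta> < t \<Longrightarrow> t \<le> \<nu> m \<Longrightarrow> V t = V (\<nu> m)"
    and "\<And>t. \<nu> m < t \<Longrightarrow> t \<le> \<nu> m + \<Delta> \<Longrightarrow> V t = V (\<nu> m + 1)"
proof -
  have "\<nu> (m + 1) \<le> \<nu> M"
    by (rule lift_Suc_mono_le_upto[of M \<nu>]) (use nu_mono m_range in \<open>auto simp: less_imp_le\<close>)
  then have "\<nu> m < \<nu> (m + 1)" "\<nu> (m + 1) \<le> T"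
    using nu_mono[of m] m_range nuM by auto
  moreover have "\<bar>int (\<nu> m) - int (\<nu> (m + 1))\<bar> \<ge> int \<Delta>"
    using sep[of "m + 1"] m_range by simp
  ultimately have next_gap: "\<nu> m + \<Delta> \<le> \<nu> (m + 1)"
    by linarith
  with \<open>\<nu> (m + 1) \<le> T\<close> show "\<nu> m + \<Delta> \<le> T"
    by simp
  have "\<nu> (m - 1) < \<nu> m" "\<bar>int (\<nu> m) - int (\<nu> (m - 1))\<bar> \<ge> int \<Delta>"
    using nu_mono[of "m - 1"] sep[of "m - 1"] m_range by simp_all
  then have prev_gap: "\<nu> (m - 1) + \<Delta> \<le> \<nu> m"
    by linarith
  then show "\<Delta> \<le> \<nu> m"
    by simp
  show "V t = V (\<nu> m)" if "\<nu> m - \<Delta> < t" "t \<le> \<nu> m" for t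
    using const[of "m - 1" t] const[of "m - 1" "\<nu> m"] that prev_gap m_range nu_mono[of "m - 1"] by simp
  show "V t = V (\<nu> m + 1)" if "\<nu> m < t" "t \<le> \<nu> m + \<Delta>" for t
    using const[of m t] that next_gap m_range by simp
qed

theorem lemma15:
  fixes V :: "nat \<Rightarrow> real ^ 'p"
    and T M \<Delta> m :: nat
    and \<nu> :: "nat \<Rightarrow> nat"
  assumes nu0: "\<nu> 0 = 0"
    and nuM: "\<nu> M = T"
    and nu_mono: "\<And>i. i < M \<Longrightarrow> \<nu> i < \<nu> (Suc i)"
    and const: "\<And>i t. i < M \<Longrightarrow> \<nu> i + 1 \<le> t \<Longrightarrow> t \<le> \<nu> (Suc i) \<Longrightarrow> V t = V (\<nu> i + 1)"
    and Delta_pos: "\<Delta> > 0"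
    and m_range: "1 \<le> m" "m \<le> M - 1"
    and sep: "\<And>m'. m' \<le> M \<Longrightarrow> m' \<noteq> m \<Longrightarrow> \<bar>int (\<nu> m) - int (\<nu> m')\<bar> \<ge> int \<Delta>"
  shows "(Max ((\<lambda>t. (norm (Vtilde V T t))\<^sup>2) ` {1..T-1}))
           \<ge> (norm (V (\<nu> m) - V (\<nu> m + 1)))\<^sup>2 * (real \<Delta>)\<^sup>2 / (48 * real T)"
proof -
  have "m < M"
    using m_range by simp
  note window = separated_changepoint_window[of \<nu> M T V m \<Delta>, OF nuM nu_mono const \<open>1 \<le> m\<close> this sep]
  have "\<exists>t\<in>{1..T-1}.
      (real \<Delta> * norm (V (\<nu> m + 1) - V (\<nu> m)))\<^sup>2 / (4 * real T) \<le> (norm (Vtilde V T t))\<^sup>2"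
    using Delta_pos window(2,1,3,4) by (rule Vtilde_jump_lower_bound)
  then obtain t where t: "t \<in> {1..T-1}"
    and bound: "(real \<Delta> * norm (V (\<nu> m + 1) - V (\<nu> m)))\<^sup>2 / (4 * real T) \<le> (norm (Vtilde V T t))\<^sup>2"
    by blast
  have "real T > 0"
    using window(1) Delta_pos by simp
  then have "(norm (V (\<nu> m) - V (\<nu> m + 1)))\<^sup>2 * (real \<Delta>)\<^sup>2 / (48 * real T)
      \<le> (norm (V (\<nu> m) - V (\<nu> m + 1)))\<^sup>2 * (real \<Delta>)\<^sup>2 / (4 * real T)"
    by (intro divide_left_mono) auto
  also have "\<dots> = (real \<Delta> * norm (V (\<nu> m + 1) - V (\<nu> m)))\<^sup>2 / (4 * real T)"
    by (simp add: norm_minus_commute power_mult_distrib)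
  also note bound
  also have "(norm (Vtilde V T t))\<^sup>2 \<le> Max ((\<lambda>t. (norm (Vtilde V T t))\<^sup>2) ` {1..T-1})"
    using t by (intro Max_ge) auto
  finally show ?thesis .
qed

end
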